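(* Let $G$ be a simple stochastic game (not necessarily stopping). Consider the Generic Strategy Improvement Algorithm (GSIA): start from an arbitrary positional MAX strategy $\sigma$; while $(\sigma,\tau(\sigma))$ is not a pair of optimal strategies of $G$, choose any subset $A$ of the arcs of $G$, find any positional MAX strategy $\sigma'$ with $\sigma' \succ_{G[A,\sigma]} \sigma$, and set $\sigma\leftarrow\sigma'$; finally return $(\sigma,\tau(\sigma))$, where $\tau(\sigma)$ is a positional best response to $\sigma$. Then, regardless of the choice of the initial strategy, of the sets $A$ and of the strategies $\sigma'$, GSIA terminates and returns a pair of optimal strategies.
   Context: A simple stochastic game (SSG) $G$ is a finite directed graph whose vertex set is partitioned into MAX vertices, MIN vertices, random vertices and a nonempty set of sinks; every non-sink vertex has at least one outgoing arc, every sink has exactly one outgoing arc, a self-loop; each random vertex $x$ carries a rational probability distribution $p_x$ on its out-neighbourhood, positive on every out-neighbour; each sink $s$ has rational value $\mathrm{Val}(s)\in[0,1]$. $G$ is stopping if under every pair of strategies the play reaches a sink with probability $1$. A positional MAX (resp. MIN) strategy assigns to each MAX (resp. MIN) vertex one of its out-neighbours. Under $\sigma,\tau$ from start $x_0$, the random play moves from MAX vertex $x$ to $\sigma(x)$, from MIN vertex $x$ to $\tau(x)$, from random vertex $x$ to an out-neighbour drawn by $p_x$ independently, and stays at a sink once reached; its value is $\mathrm{Val}(s)$ if it reaches sink $s$, else $0$, and $v^G_{\sigma,\tau}(x_0)$ is its expectation. A best response to $\sigma$ is a positional MIN strategy $\tau$ with $v_{\sigma,\tau}\le v_{\sigma,\tau'}$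 pointwise for all MIN strategies $\tau'$ (one exists); $v^G_\sigma:=v^G_{\sigma,\tau}$ for such $\tau$; symmetrically for best responses to a MIN strategy $\tau$ and $v^G_\tau$. A pair $(\sigma,\tau)$ of positional strategies is optimal if $v^G_{\sigma,\tau}=v^G_\sigma=v^G_\tau$, equivalently $\sigma$ maximises $v^G_\sigma$ pointwise over positional MAX strategies and $\tau$ is a best response to $\sigma$. Vectors are compared pointwise; $v>v'$ means $v\ge v'$ and $v\ne v'$. In a game $H$, $\sigma'\succ_H\sigma$ means $v^H_{\sigma'}>v^H_\sigma$ and, for every MAX vertex $x$ with $v^H_{\sigma'}(x)=v^H_\sigma(x)$, $\sigma'(x)=\sigma(x)$. Transformed game: $G[A,\sigma]$ is obtained from a copy of $G$ by replacing each arc $e=(x,y)\in A$ by an arc $(x,s_e)$ to a new sink $s_e$ of value $v^G_\sigma(y)$ (for random $x$, $p_x(s_e)=p_x(y)$); $y$ is kept. Strategies of $G$ and $G[A,\sigma]$ are identified, and value vectors of $G[A,\sigma]$ are compared only on vertices of $G$. *)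

theory Defs
  imports Complex_Main
begin

record 'v ssg =
  Vmax  :: "'v set"
  Vmin  :: "'v set"
  Vrand :: "'v set"
  Vsink :: "'v set"
  arcs  :: "('v \<times> 'v) set"
  prob  :: "'v \<Rightarrow> 'v \<Rightarrow> real"   \<comment> \<open>prob x y = p_x(y) for random x and out-neighbour y\<close>
  sval  :: "'v \<Rightarrow> real"

definition verts :: "('v, 'a) ssg_scheme \<Rightarrow> 'v set" where
  "verts G = Vmax G \<union> Vmin G \<union> Vrand G \<union> Vsink G"

definition outn :: "('v, 'a) ssg_scheme \<Rightarrow> 'v \<Rightarrow> 'v set" where
  "outn G x = {y. (x, y) \<in> arcs G}"

definition valid_ssg :: "('v, 'a) ssg_scheme \<Rightarrow> bool" where
  "valid_ssg G \<longleftrightarrow>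
     finite (verts G) \<and>
     Vmax G \<inter> Vmin G = {} \<and> Vmax G \<inter> Vrand G = {} \<and> Vmax G \<inter> Vsink G = {} \<and>
     Vmin G \<inter> Vrand G = {} \<and> Vmin G \<inter> Vsink G = {} \<and> Vrand G \<inter> Vsink G = {} \<and>
     Vsink G \<noteq> {} \<and>
     arcs G \<subseteq> verts G \<times> verts G \<and>
     (\<forall>x \<in> verts G - Vsink G. outn G x \<noteq> {}) \<and>
     (\<forall>s \<in> Vsink G. outn G s = {s}) \<and>
     (\<forall>x \<in> Vrand G. (\<forall>y \<in> outn G x. prob G x y > 0 \<and> prob G x y \<in> \<rat>) \<and>
                     (\<Sum>y \<in> outn G x. prob G x y) = 1) \<and>
     (\<forall>s \<in> Vsink G. sval G s \<in> \<rat> \<and> 0 \<le> sval G s \<and> sval G s \<le> 1)"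

text \<open>Positional strategies (only their values on MAX resp. MIN vertices matter).\<close>

definition max_strat :: "('v, 'a) ssg_scheme \<Rightarrow> ('v \<Rightarrow> 'v) \<Rightarrow> bool" where
  "max_strat G \<sigma> \<longleftrightarrow> (\<forall>x \<in> Vmax G. (x, \<sigma> x) \<in> arcs G)"

definition min_strat :: "('v, 'a) ssg_scheme \<Rightarrow> ('v \<Rightarrow> 'v) \<Rightarrow> bool" where
  "min_strat G \<tau> \<longleftrightarrow> (\<forall>x \<in> Vmin G. (x, \<tau> x) \<in> arcs G)"

definition next_exp ::
  "('v, 'a) ssg_scheme \<Rightarrow> ('v \<Rightarrow> 'v) \<Rightarrow> ('v \<Rightarrow> 'v) \<Rightarrow> ('v \<Rightarrow> real) \<Rightarrow> 'v \<Rightarrow> real" where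
  "next_exp G \<sigma> \<tau> f x =
     (if x \<in> Vmax G then f (\<sigma> x)
      else if x \<in> Vmin G then f (\<tau> x)
      else if x \<in> Vrand G then (\<Sum>y \<in> outn G x. prob G x y * f y)
      else f x)"

text \<open>\<open>hval G \<sigma> \<tau> n x\<close> = expected value of the payoff \<open>Val(X_n)\<close> if \<open>X_n\<close> is a sink and
  \<open>0\<close> otherwise, where \<open>X_n\<close> is the position after \<open>n\<close> steps of the random play from \<open>x\<close>.\<close>

fun hval :: "('v, 'a) ssg_scheme \<Rightarrow> ('v \<Rightarrow> 'v) \<Rightarrow> ('v \<Rightarrow> 'v) \<Rightarrow> nat \<Rightarrow> 'v \<Rightarrow> real" where
  "hval G \<sigma> \<tau> 0 x = (if x \<in> Vsink G then sval G x else 0)"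
| "hval G \<sigma> \<tau> (Suc n) x = next_exp G \<sigma> \<tau> (hval G \<sigma> \<tau> n) x"

text \<open>Since sinks are absorbing and have nonnegative values, \<open>hval\<close> is nondecreasing in \<open>n\<close>
  and converges to the expected payoff of the play (value of the reached sink, or 0).\<close>

definition pval :: "('v, 'a) ssg_scheme \<Rightarrow> ('v \<Rightarrow> 'v) \<Rightarrow> ('v \<Rightarrow> 'v) \<Rightarrow> 'v \<Rightarrow> real" where
  "pval G \<sigma> \<tau> x = (SUP n. hval G \<sigma> \<tau> n x)"

definition best_resp_min :: "('v, 'a) ssg_scheme \<Rightarrow> ('v \<Rightarrow> 'v) \<Rightarrow> ('v \<Rightarrow> 'v) \<Rightarrow> bool" where
  "best_resp_min G \<sigma> \<tau> \<longleftrightarrow> min_strat G \<tau> \<and>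
     (\<forall>\<tau>'. min_strat G \<tau>' \<longrightarrow> (\<forall>x \<in> verts G. pval G \<sigma> \<tau> x \<le> pval G \<sigma> \<tau>' x))"

definition best_resp_max :: "('v, 'a) ssg_scheme \<Rightarrow> ('v \<Rightarrow> 'v) \<Rightarrow> ('v \<Rightarrow> 'v) \<Rightarrow> bool" where
  "best_resp_max G \<tau> \<sigma> \<longleftrightarrow> max_strat G \<sigma> \<and>
     (\<forall>\<sigma>'. max_strat G \<sigma>' \<longrightarrow> (\<forall>x \<in> verts G. pval G \<sigma>' \<tau> x \<le> pval G \<sigma> \<tau> x))"

definition br :: "('v, 'a) ssg_scheme \<Rightarrow> ('v \<Rightarrow> 'v) \<Rightarrow> ('v \<Rightarrow> 'v)" where
  "br G \<sigma> = (SOME \<tau>. best_resp_min G \<sigma> \<tau>)"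

definition vmax :: "('v, 'a) ssg_scheme \<Rightarrow> ('v \<Rightarrow> 'v) \<Rightarrow> 'v \<Rightarrow> real" where
  "vmax G \<sigma> = pval G \<sigma> (br G \<sigma>)"

definition vmin :: "('v, 'a) ssg_scheme \<Rightarrow> ('v \<Rightarrow> 'v) \<Rightarrow> 'v \<Rightarrow> real" where
  "vmin G \<tau> = pval G (SOME \<sigma>. best_resp_max G \<tau> \<sigma>) \<tau>"

definition optimal_pair :: "('v, 'a) ssg_scheme \<Rightarrow> ('v \<Rightarrow> 'v) \<Rightarrow> ('v \<Rightarrow> 'v) \<Rightarrow> bool" where
  "optimal_pair G \<sigma> \<tau> \<longleftrightarrow> max_strat G \<sigma> \<and> min_strat G \<tau> \<and>
     (\<forall>x \<in> verts G. pval G \<sigma> \<tau> x = vmax G \<sigma> x \<and> vmax G \<sigma> x = vmin G \<tau> x)"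

text \<open>Vertices of \<open>G[A,\<sigma>]\<close>: \<open>Inl x\<close> for the copy of vertex \<open>x\<close> of \<open>G\<close>, and \<open>Inr e\<close> for
  the new sink \<open>s_e\<close>. Arcs of \<open>A\<close> leaving a sink (self-loops) are left in place, so that sinks
  remain sinks (replacing them would not change any value).\<close>

definition repl :: "('v, 'a) ssg_scheme \<Rightarrow> ('v \<times> 'v) set \<Rightarrow> ('v \<times> 'v) set" where
  "repl G A = {e \<in> A \<inter> arcs G. fst e \<notin> Vsink G}"

definition transf :: "('v, 'a) ssg_scheme \<Rightarrow> ('v \<times> 'v) set \<Rightarrow> ('v \<Rightarrow> 'v)
                       \<Rightarrow> ('v + 'v \<times> 'v) ssg" where
  "transf G A \<sigma> = \<lparr>
     Vmax = Inl ` Vmax G, Vmin = Inl ` Vmin G, Vrand = Inl ` Vrand G,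
     Vsink = Inl ` Vsink G \<union> Inr ` repl G A,
     arcs = {(Inl x, Inl y) | x y. (x, y) \<in> arcs G - repl G A}
          \<union> {(Inl x, Inr (x, y)) | x y. (x, y) \<in> repl G A}
          \<union> {(Inr e, Inr e) | e. e \<in> repl G A},
     prob = (\<lambda>a b. case (a, b) of
               (Inl x, Inl y) \<Rightarrow> prob G x y
             | (Inl x, Inr (x', y)) \<Rightarrow> (if x' = x then prob G x y else 0)
             | _ \<Rightarrow> 0),
     sval = (\<lambda>a. case a of Inl x \<Rightarrow> sval G x | Inr (x, y) \<Rightarrow> vmax G \<sigma> y) \<rparr>"

definition lift_strat :: "('v, 'a) ssg_scheme \<Rightarrow> ('v \<times> 'v) set \<Rightarrow> ('v \<Rightarrow> 'v)
                           \<Rightarrow> ('v + 'v \<times> 'v \<Rightarrow> 'v + 'v \<times> 'v)" where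
  "lift_strat G A \<sigma> = (\<lambda>a. case a of
       Inl x \<Rightarrow> (if (x, \<sigma> x) \<in> repl G A then Inr (x, \<sigma> x) else Inl (\<sigma> x))
     | Inr e \<Rightarrow> Inr e)"

definition improves :: "('v, 'a) ssg_scheme \<Rightarrow> ('v \<times> 'v) set \<Rightarrow> ('v \<Rightarrow> 'v)
                        \<Rightarrow> ('v \<Rightarrow> 'v) \<Rightarrow> bool" where
  "improves G A \<sigma> \<sigma>' \<longleftrightarrow>
     (let H = transf G A \<sigma>; w' = vmax H (lift_strat G A \<sigma>'); w = vmax H (lift_strat G A \<sigma>) in
       (\<forall>x \<in> verts G. w (Inl x) \<le> w' (Inl x)) \<and> (\<exists>x \<in> verts G. w (Inl x) \<noteq> w' (Inl x)) \<and>
       (\<forall>x \<in> Vmax G. w' (Inl x) = w (Inl x) \<longrightarrow> \<sigma>' x = \<sigma> x))"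

definition gsia_step :: "('v, 'a) ssg_scheme \<Rightarrow> ('v \<Rightarrow> 'v) \<Rightarrow> ('v \<Rightarrow> 'v) \<Rightarrow> bool" where
  "gsia_step G \<sigma> \<sigma>' \<longleftrightarrow> max_strat G \<sigma> \<and> \<not> optimal_pair G \<sigma> (br G \<sigma>) \<and>
     (\<exists>A \<subseteq> arcs G. max_strat G \<sigma>' \<and> improves G A \<sigma> \<sigma>')"

end

theory Submission
  imports Defs "HOL-Library.FuncSet"
begin

text \<open>The values of a MAX strategy \<open>\<sigma>\<close> are the least fixpoint of the Bellman operator of the
  one-player game left to MIN, and a greedy choice with respect to them is a best response.
  Everything else rests on a maximum principle: a function that is subharmonic for the Markov
  chain of \<open>\<sigma>, \<tau>\<close>, bounded by the sink values and nonpositive on every sink-free trap on which it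
  is constant lies below the values of \<open>\<sigma>, \<tau>\<close>. It shows that a strategy without an improving
  switch is optimal, and that improving switches increase values. The new sinks of \<open>G[A,\<sigma>]\<close>
  carry exactly the values of \<open>\<sigma>\<close>, so \<open>\<sigma>\<close> has the same values in \<open>G\<close> and in \<open>G[A,\<sigma>]\<close>;
  hence an improving switch of \<open>G\<close> is an improvement in every \<open>G[A,\<sigma>]\<close>, and conversely an
  improvement in \<open>G[A,\<sigma>]\<close> strictly increases the values in \<open>G\<close>. As values depend only on
  the finitely many positional strategies, GSIA terminates, and it can only stop at an optimal
  strategy.\<close>

section \<open>Least fixpoints by iteration\<close>

definition iter_sup :: "(('w \<Rightarrow> real) \<Rightarrow> 'w \<Rightarrow> real) \<Rightarrow> ('w \<Rightarrow> real) \<Rightarrow> 'w \<Rightarrow> real" where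
  "iter_sup Op h x = (SUP n. (Op ^^ n) h x)"

lemma funpow_le_postfixpoint:
  assumes "mono Op" "h \<le> b" "Op b \<le> b"
  shows "(Op ^^ n) h \<le> b"
proof (induction n)
  case (Suc n)
  then show ?case using monoD[OF assms(1) Suc] assms(3) by simp
qed (use assms in simp)

lemma iter_sup_le_postfixpoint:
  assumes "mono Op" "h \<le> b" "Op b \<le> b"
  shows "iter_sup Op h \<le> b"
  unfolding iter_sup_def le_fun_def
  using funpow_le_postfixpoint[OF assms] by (auto simp: le_fun_def intro: cSUP_least)

lemma funpow_le_iter_sup:
  assumes "mono Op" "h \<le> b" "Op b \<le> b"
  shows "(Op ^^ n) h x \<le> iter_sup Op h x"
  unfolding iter_sup_def
  using funpow_le_postfixpoint[OF assms] by (intro cSUP_upper bdd_aboveI[of _ "b x"]) (auto simp: le_fun_def)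

lemma iter_sup_fixpoint:
  assumes mono: "mono Op" and start: "h \<le> Op h" and bound: "h \<le> b" "Op b \<le> b"
    and cont: "\<And>u l x. (\<And>y. (\<lambda>n. u n y) \<longlonglongrightarrow> l y) \<Longrightarrow> (\<lambda>n. Op (u n) x) \<longlonglongrightarrow> Op l x"
  shows "Op (iter_sup Op h) = iter_sup Op h"
proof
  fix x
  have lim: "(\<lambda>n. (Op ^^ n) h y) \<longlonglongrightarrow> iter_sup Op h y" for y
    unfolding iter_sup_def
  proof (rule LIMSEQ_incseq_SUP)
    show "bdd_above (range (\<lambda>n. (Op ^^ n) h y))"
      using funpow_le_postfixpoint[OF mono bound] by (intro bdd_aboveI[of _ "b y"]) (auto simp: le_fun_def)
    have "(Op ^^ n) h \<le> (Op ^^ Suc n) h" for n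
      by (rule funpow_mono2[OF mono]) (use start in auto)
    then show "incseq (\<lambda>n. (Op ^^ n) h y)"
      by (intro incseq_SucI) (simp add: le_fun_def)
  qed
  have "(\<lambda>n. Op ((Op ^^ n) h) x) \<longlonglongrightarrow> iter_sup Op h x"
    using LIMSEQ_Suc[OF lim[of x]] by simp
  moreover have "(\<lambda>n. Op ((Op ^^ n) h) x) \<longlonglongrightarrow> Op (iter_sup Op h) x"
    by (rule cont) (rule lim)
  ultimately show "Op (iter_sup Op h) x = iter_sup Op h x"
    using LIMSEQ_unique by blast
qed

section \<open>Values of strategy pairs\<close>

definition sink_payoff :: "('v, 'a) ssg_scheme \<Rightarrow> 'v \<Rightarrow> real" where
  "sink_payoff G x = (if x \<in> Vsink G then sval G x else 0)"

definition succs :: "('v, 'a) ssg_scheme \<Rightarrow> ('v \<Rightarrow> 'v) \<Rightarrow> ('v \<Rightarrow> 'v) \<Rightarrow> 'v \<Rightarrow> 'v set" where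
  "succs G \<sigma> \<tau> x =
     (if x \<in> Vmax G then {\<sigma> x} else if x \<in> Vmin G then {\<tau> x}
      else if x \<in> Vrand G then outn G x else {x})"

definition trap :: "('v, 'a) ssg_scheme \<Rightarrow> ('v \<Rightarrow> 'v) \<Rightarrow> ('v \<Rightarrow> 'v) \<Rightarrow> 'v set \<Rightarrow> bool" where
  "trap G \<sigma> \<tau> S \<longleftrightarrow> (\<forall>x \<in> S. succs G \<sigma> \<tau> x \<subseteq> S)"

lemma hval_eq_funpow: "hval G \<sigma> \<tau> n = (next_exp G \<sigma> \<tau> ^^ n) (sink_payoff G)"
  by (induction n) (auto simp: sink_payoff_def)

lemma pval_eq_iter_sup: "pval G \<sigma> \<tau> = iter_sup (next_exp G \<sigma> \<tau>) (sink_payoff G)"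
  by (auto simp: pval_def iter_sup_def hval_eq_funpow)

lemma next_exp_deterministic:
  assumes "x \<notin> Vrand G - Vmax G - Vmin G"
  obtains z where "succs G \<sigma> \<tau> x = {z}" "next_exp G \<sigma> \<tau> f x = f z"
  using assms that by (cases "x \<in> Vmax G"; cases "x \<in> Vmin G") (auto simp: succs_def next_exp_def)

text \<open>Unlike \<open>valid_ssg\<close>, no rationality, no sink and no self-loops at sinks are required:
  the new sinks of a transformed game carry values that need not be rational.\<close>

locale wf_ssg =
  fixes G :: "('v, 'a) ssg_scheme"
  assumes finite_verts: "finite (verts G)"
    and max_min_disjoint: "Vmax G \<inter> Vmin G = {}"
    and sink_disjoint: "Vsink G \<inter> (Vmax G \<union> Vmin G \<union> Vrand G) = {}"
    and arcs_verts: "arcs G \<subseteq> verts G \<times> verts G"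
    and outn_min_nonempty: "x \<in> Vmin G \<Longrightarrow> outn G x \<noteq> {}"
    and prob_pos: "x \<in> Vrand G \<Longrightarrow> y \<in> outn G x \<Longrightarrow> 0 < prob G x y"
    and prob_sum: "x \<in> Vrand G \<Longrightarrow> (\<Sum>y \<in> outn G x. prob G x y) = 1"
    and sval_nonneg: "s \<in> Vsink G \<Longrightarrow> 0 \<le> sval G s"
    and sval_le_1: "s \<in> Vsink G \<Longrightarrow> sval G s \<le> 1"

lemma valid_ssg_imp_wf_ssg:
  assumes "valid_ssg G"
  shows "wf_ssg G"
proof
  note valid = assms[unfolded valid_ssg_def]
  show "finite (verts G)" "Vmax G \<inter> Vmin G = {}" "arcs G \<subseteq> verts G \<times> verts G"
    using valid by simp_all
  show "Vsink G \<inter> (Vmax G \<union> Vmin G \<union> Vrand G) = {}"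
    using valid by (simp add: Int_Un_distrib Int_commute)
  show "outn G x \<noteq> {}" if "x \<in> Vmin G" for x
  proof -
    have "x \<in> verts G - Vsink G"
      using valid that by (auto simp: verts_def)
    then show ?thesis
      using valid by simp
  qed
  show "0 < prob G x y" if "x \<in> Vrand G" "y \<in> outn G x" for x y
    using valid that by simp
  show "(\<Sum>y \<in> outn G x. prob G x y) = 1" if "x \<in> Vrand G" for x
    using valid that by simp
  show "0 \<le> sval G s" "sval G s \<le> 1" if "s \<in> Vsink G" for s
    using valid that by simp_all
qed

context wf_ssg
begin

lemma outn_subset_verts: "outn G x \<subseteq> verts G"
  using arcs_verts by (auto simp: outn_def)

lemma finite_outn: "finite (outn G x)"
  using finite_subset[OF outn_subset_verts finite_verts] .

lemma prob_nonneg: "x \<in> Vrand G \<Longrightarrow> y \<in> outn G x \<Longrightarrow> 0 \<le> prob G x y"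
  using prob_pos by fastforce

lemma succs_subset_verts:
  assumes "max_strat G \<sigma>" "min_strat G \<tau>" "x \<in> verts G"
  shows "succs G \<sigma> \<tau> x \<subseteq> verts G"
  using assms arcs_verts outn_subset_verts by (auto simp: succs_def max_strat_def min_strat_def)

lemma next_exp_le_bound:
  assumes "\<And>y. y \<in> succs G \<sigma> \<tau> x \<Longrightarrow> f y \<le> c"
  shows "next_exp G \<sigma> \<tau> f x \<le> c"
proof (cases "x \<in> Vrand G - Vmax G - Vmin G")
  case True
  then have "(\<Sum>y \<in> outn G x. prob G x y * f y) \<le> (\<Sum>y \<in> outn G x. prob G x y * c)"
    using assms prob_nonneg by (intro sum_mono mult_left_mono) (auto simp: succs_def)
  also have "\<dots> = c"
    using True prob_sum by (simp add: sum_distrib_right[symmetric])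
  finally show ?thesis
    using True by (simp add: next_exp_def)
next
  case False
  then obtain z where "succs G \<sigma> \<tau> x = {z}" "next_exp G \<sigma> \<tau> f x = f z"
    by (rule next_exp_deterministic)
  then show ?thesis using assms by simp
qed

lemma next_exp_nonneg:
  assumes "\<And>y. 0 \<le> f y"
  shows "0 \<le> next_exp G \<sigma> \<tau> f x"
  using assms prob_nonneg by (auto simp: next_exp_def intro!: sum_nonneg)

lemma next_exp_ge_bound_imp_eq:
  assumes le: "\<And>z. z \<in> succs G \<sigma> \<tau> x \<Longrightarrow> f z \<le> c"
    and ge: "c \<le> next_exp G \<sigma> \<tau> f x" and y: "y \<in> succs G \<sigma> \<tau> x"
  shows "f y = c"
proof (cases "x \<in> Vrand G - Vmax G - Vmin G")
  case True
  then have succs: "succs G \<sigma> \<tau> x = outn G x"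
    by (simp add: succs_def)
  have nonneg: "0 \<le> prob G x z * (c - f z)" if "z \<in> outn G x" for z
  proof -
    have "f z \<le> c"
      using le succs that by blast
    then show ?thesis
      using prob_nonneg True that by simp
  qed
  have "(\<Sum>z \<in> outn G x. prob G x z * (c - f z))
      = c * (\<Sum>z \<in> outn G x. prob G x z) - (\<Sum>z \<in> outn G x. prob G x z * f z)"
    by (simp add: right_diff_distrib sum_subtractf sum_distrib_left mult.commute)
  also have "\<dots> = c - next_exp G \<sigma> \<tau> f x"
    using True prob_sum by (simp add: next_exp_def)
  finally have "(\<Sum>z \<in> outn G x. prob G x z * (c - f z)) = c - next_exp G \<sigma> \<tau> f x" .
  moreover have "0 \<le> (\<Sum>z \<in> outn G x. prob G x z * (c - f z))"
    using nonneg by (rule sum_nonneg)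
  ultimately have "(\<Sum>z \<in> outn G x. prob G x z * (c - f z)) = 0"
    using ge by linarith
  then have "\<forall>z \<in> outn G x. prob G x z * (c - f z) = 0"
    by (simp add: sum_nonneg_eq_0_iff[OF finite_outn nonneg])
  then have "prob G x y * (c - f y) = 0"
    using y succs by simp
  moreover have "0 < prob G x y"
    using prob_pos True y succs by simp
  ultimately show ?thesis
    by simp
next
  case False
  then obtain z where "succs G \<sigma> \<tau> x = {z}" "next_exp G \<sigma> \<tau> f x = f z"
    by (rule next_exp_deterministic)
  with le ge y show ?thesis
    by (simp add: antisym)
qed

lemma mono_next_exp: "mono (next_exp G \<sigma> \<tau>)"
proof (intro monoI le_funI)
  fix f g :: "'v \<Rightarrow> real" and x
  assume "f \<le> g"
  then have "prob G x y * f y \<le> prob G x y * g y" if "x \<in> Vrand G" "y \<in> outn G x" for y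
    using prob_nonneg[OF that] by (simp add: le_fun_def mult_left_mono)
  with \<open>f \<le> g\<close> show "next_exp G \<sigma> \<tau> f x \<le> next_exp G \<sigma> \<tau> g x"
    unfolding next_exp_def le_fun_def by (simp add: sum_mono)
qed

lemma next_exp_tendsto:
  assumes "\<And>y. (\<lambda>n. u n y) \<longlonglongrightarrow> l y"
  shows "(\<lambda>n. next_exp G \<sigma> \<tau> (u n) x) \<longlonglongrightarrow> next_exp G \<sigma> \<tau> l x"
  using assms by (auto simp: next_exp_def intro!: tendsto_sum tendsto_mult_left)

lemma sink_payoff_le_1: "sink_payoff G \<le> (\<lambda>_. 1)"
  using sval_le_1 by (simp add: sink_payoff_def le_fun_def)

lemma sink_payoff_nonneg: "0 \<le> sink_payoff G x"
  using sval_nonneg by (simp add: sink_payoff_def)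

lemma next_exp_sink: "s \<in> Vsink G \<Longrightarrow> next_exp G \<sigma> \<tau> f s = f s"
  using sink_disjoint by (auto simp: next_exp_def)

lemma sink_payoff_le_next_exp: "sink_payoff G \<le> next_exp G \<sigma> \<tau> (sink_payoff G)"
proof (rule le_funI)
  fix x
  show "sink_payoff G x \<le> next_exp G \<sigma> \<tau> (sink_payoff G) x"
  proof (cases "x \<in> Vsink G")
    case True
    then show ?thesis by (simp add: next_exp_sink)
  next
    case False
    then show ?thesis
      using next_exp_nonneg[of "sink_payoff G", OF sink_payoff_nonneg] by (simp add: sink_payoff_def)
  qed
qed

lemma next_exp_1: "next_exp G \<sigma> \<tau> (\<lambda>_. 1) \<le> (\<lambda>_. 1)"
  by (simp add: le_fun_def next_exp_le_bound)

lemma pval_fixpoint: "next_exp G \<sigma> \<tau> (pval G \<sigma> \<tau>) = pval G \<sigma> \<tau>"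
  unfolding pval_eq_iter_sup
  by (rule iter_sup_fixpoint[OF mono_next_exp sink_payoff_le_next_exp sink_payoff_le_1 next_exp_1
        next_exp_tendsto])

lemma pval_le_postfixpoint:
  assumes "sink_payoff G \<le> g" "next_exp G \<sigma> \<tau> g \<le> g"
  shows "pval G \<sigma> \<tau> \<le> g"
  unfolding pval_eq_iter_sup using mono_next_exp assms by (rule iter_sup_le_postfixpoint)

lemma sink_payoff_le_pval: "sink_payoff G x \<le> pval G \<sigma> \<tau> x"
  using funpow_le_iter_sup[OF mono_next_exp sink_payoff_le_1 next_exp_1, of 0]
  by (simp add: pval_eq_iter_sup)

lemma pval_nonneg: "0 \<le> pval G \<sigma> \<tau> x"
  by (rule order_trans[OF sink_payoff_nonneg sink_payoff_le_pval])

lemma pval_le_1: "pval G \<sigma> \<tau> x \<le> 1"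
  using pval_le_postfixpoint[OF sink_payoff_le_1 next_exp_1] by (simp add: le_fun_def)

lemma pval_sink:
  assumes "s \<in> Vsink G"
  shows "pval G \<sigma> \<tau> s = sval G s"
proof (rule antisym)
  define g where "g x = (if x \<in> Vsink G then sval G x else 1)" for x
  have "next_exp G \<sigma> \<tau> g x \<le> g x" for x
  proof (cases "x \<in> Vsink G")
    case True
    then show ?thesis by (simp add: next_exp_sink)
  next
    case False
    have "g y \<le> 1" for y
      using sval_le_1 by (simp add: g_def)
    then show ?thesis
      using False by (simp add: g_def next_exp_le_bound)
  qed
  then have "pval G \<sigma> \<tau> \<le> g"
    using sval_le_1 by (intro pval_le_postfixpoint) (auto simp: le_fun_def sink_payoff_def g_def)
  then have "pval G \<sigma> \<tau> s \<le> g s"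
    by (rule le_funD)
  then show "pval G \<sigma> \<tau> s \<le> sval G s"
    using assms by (simp add: g_def)
  show "sval G s \<le> pval G \<sigma> \<tau> s"
    using sink_payoff_le_pval[of s] assms by (simp add: sink_payoff_def)
qed

lemma pval_trap:
  assumes "trap G \<sigma> \<tau> S" "S \<inter> Vsink G = {}" "x \<in> S"
  shows "pval G \<sigma> \<tau> x = 0"
proof -
  define g :: "'v \<Rightarrow> real" where "g x = (if x \<in> S then 0 else 1)" for x
  have "next_exp G \<sigma> \<tau> g y \<le> g y" for y
  proof (rule next_exp_le_bound)
    fix z assume "z \<in> succs G \<sigma> \<tau> y"
    then show "g z \<le> g y"
      using assms(1) by (auto simp: g_def trap_def)
  qed
  then have "pval G \<sigma> \<tau> \<le> g"
    using assms(2) sval_le_1 by (intro pval_le_postfixpoint) (auto simp: le_fun_def sink_payoff_def g_def)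
  then have "pval G \<sigma> \<tau> x \<le> g x"
    by (rule le_funD)
  then show ?thesis
    using assms(3) pval_nonneg[of \<sigma> \<tau> x] by (simp add: g_def)
qed

text \<open>Off the game every value is \<open>0\<close>, so value vectors may be compared as functions.\<close>

lemma pval_outside_verts:
  assumes "x \<notin> verts G"
  shows "pval G \<sigma> \<tau> x = 0"
proof (rule pval_trap)
  show "trap G \<sigma> \<tau> (- verts G)"
    by (auto simp: trap_def succs_def verts_def)
  show "- verts G \<inter> Vsink G = {}"
    by (auto simp: verts_def)
qed (use assms in simp)

end

section \<open>Best responses and the values of a MAX strategy\<close>

lemma tendsto_Min_image:
  fixes f :: "'i \<Rightarrow> 'a \<Rightarrow> 'b::linorder_topology"
  assumes "finite S" "S \<noteq> {}" "\<And>y. y \<in> S \<Longrightarrow> ((\<lambda>n. f n y) \<longlongrightarrow> l y) F"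
  shows "((\<lambda>n. Min (f n ` S)) \<longlongrightarrow> Min (l ` S)) F"
  using assms
proof (induction S rule: finite_ne_induct)
  case (insert x S)
  then have "((\<lambda>n. min (f n x) (Min (f n ` S))) \<longlongrightarrow> min (l x) (Min (l ` S))) F"
    by (intro tendsto_min) auto
  then show ?case using insert by simp
qed simp

definition bellman :: "('v, 'a) ssg_scheme \<Rightarrow> ('v \<Rightarrow> 'v) \<Rightarrow> ('v \<Rightarrow> real) \<Rightarrow> 'v \<Rightarrow> real" where
  "bellman G \<sigma> f x =
     (if x \<in> Vmax G then f (\<sigma> x)
      else if x \<in> Vmin G then Min (f ` outn G x)
      else if x \<in> Vrand G then (\<Sum>y \<in> outn G x. prob G x y * f y)
      else f x)"

definition bellman_value :: "('v, 'a) ssg_scheme \<Rightarrow> ('v \<Rightarrow> 'v) \<Rightarrow> 'v \<Rightarrow> real" where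
  "bellman_value G \<sigma> = iter_sup (bellman G \<sigma>) (sink_payoff G)"

definition greedy :: "('v, 'a) ssg_scheme \<Rightarrow> ('v \<Rightarrow> real) \<Rightarrow> 'v \<Rightarrow> 'v" where
  "greedy G f x = arg_min_on f (outn G x)"

lemma bellman_cong:
  assumes "\<And>x. x \<in> Vmax G \<Longrightarrow> \<sigma>1 x = \<sigma>2 x"
  shows "bellman G \<sigma>1 = bellman G \<sigma>2"
  using assms by (intro ext) (simp add: bellman_def)

lemma next_exp_Vmax: "x \<in> Vmax G \<Longrightarrow> next_exp G \<sigma> \<tau> f x = f (\<sigma> x)"
  by (simp add: next_exp_def)

lemma next_exp_cong_max:
  assumes "x \<in> Vmax G \<Longrightarrow> \<sigma>1 x = \<sigma>2 x"
  shows "next_exp G \<sigma>1 \<tau> f x = next_exp G \<sigma>2 \<tau> f x"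
  using assms by (simp add: next_exp_def)

lemma succs_cong_max:
  assumes "x \<in> Vmax G \<Longrightarrow> \<sigma>1 x = \<sigma>2 x"
  shows "succs G \<sigma>1 \<tau> x = succs G \<sigma>2 \<tau> x"
  using assms by (simp add: succs_def)

lemma next_exp_diff:
  "next_exp G \<sigma> \<tau> (\<lambda>y. f y - g y) x = next_exp G \<sigma> \<tau> f x - next_exp G \<sigma> \<tau> g x"
  by (simp add: next_exp_def right_diff_distrib sum_subtractf)

context wf_ssg
begin

lemma greedy_in_outn: "x \<in> Vmin G \<Longrightarrow> greedy G f x \<in> outn G x"
  unfolding greedy_def by (rule arg_min_if_finite(1)[OF finite_outn outn_min_nonempty])

lemma greedy_Min:
  assumes "x \<in> Vmin G"
  shows "f (greedy G f x) = Min (f ` outn G x)"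
proof -
  have "f (greedy G f x) \<le> f y" if "y \<in> outn G x" for y
    unfolding greedy_def by (rule arg_min_least[OF finite_outn outn_min_nonempty[OF assms] that])
  then show ?thesis
    using greedy_in_outn[OF assms] finite_outn by (intro Min_eqI[symmetric]) auto
qed

lemma min_strat_greedy: "min_strat G (greedy G f)"
  using greedy_in_outn by (simp add: min_strat_def outn_def)

lemma bellman_eq_next_exp_greedy: "bellman G \<sigma> f = next_exp G \<sigma> (greedy G f) f"
  by (intro ext) (simp add: bellman_def next_exp_def greedy_Min)

lemma bellman_le_next_exp:
  assumes "min_strat G \<tau>"
  shows "bellman G \<sigma> f x \<le> next_exp G \<sigma> \<tau> f x"
proof (cases "x \<in> Vmin G - Vmax G")
  case True
  then have "\<tau> x \<in> outn G x"
    using assms by (simp add: min_strat_def outn_def)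
  then have "Min (f ` outn G x) \<le> f (\<tau> x)"
    using finite_outn by simp
  then show ?thesis
    using True by (simp add: bellman_def next_exp_def)
qed (auto simp: bellman_def next_exp_def)

lemma mono_bellman: "mono (bellman G \<sigma>)"
proof (intro monoI le_funI)
  fix f g :: "'v \<Rightarrow> real" and x
  assume "f \<le> g"
  have "bellman G \<sigma> f x \<le> next_exp G \<sigma> (greedy G g) f x"
    by (rule bellman_le_next_exp[OF min_strat_greedy])
  also have "\<dots> \<le> next_exp G \<sigma> (greedy G g) g x"
    using monoD[OF mono_next_exp \<open>f \<le> g\<close>] by (rule le_funD)
  also have "\<dots> = bellman G \<sigma> g x"
    by (simp add: bellman_eq_next_exp_greedy)
  finally show "bellman G \<sigma> f x \<le> bellman G \<sigma> g x" .
qed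

lemma bellman_tendsto:
  assumes "\<And>y. (\<lambda>n. u n y) \<longlonglongrightarrow> l y"
  shows "(\<lambda>n. bellman G \<sigma> (u n) x) \<longlonglongrightarrow> bellman G \<sigma> l x"
proof -
  have "(\<lambda>n. Min (u n ` outn G x)) \<longlonglongrightarrow> Min (l ` outn G x)" if "x \<in> Vmin G"
    using finite_outn outn_min_nonempty[OF that] assms by (rule tendsto_Min_image)
  then show ?thesis
    using assms by (simp add: bellman_def tendsto_sum tendsto_mult_left)
qed

lemma sink_payoff_le_bellman: "sink_payoff G \<le> bellman G \<sigma> (sink_payoff G)"
  by (simp add: bellman_eq_next_exp_greedy sink_payoff_le_next_exp)

lemma bellman_1: "bellman G \<sigma> (\<lambda>_. 1) \<le> (\<lambda>_. 1)"
  by (simp add: bellman_eq_next_exp_greedy next_exp_1)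

lemma bellman_value_fixpoint: "bellman G \<sigma> (bellman_value G \<sigma>) = bellman_value G \<sigma>"
  unfolding bellman_value_def
  by (rule iter_sup_fixpoint[OF mono_bellman sink_payoff_le_bellman sink_payoff_le_1 bellman_1
        bellman_tendsto])

lemma bellman_value_le_postfixpoint:
  assumes "sink_payoff G \<le> g" "bellman G \<sigma> g \<le> g"
  shows "bellman_value G \<sigma> \<le> g"
  unfolding bellman_value_def using mono_bellman assms by (rule iter_sup_le_postfixpoint)

lemma sink_payoff_le_bellman_value: "sink_payoff G \<le> bellman_value G \<sigma>"
  using funpow_le_iter_sup[OF mono_bellman sink_payoff_le_1 bellman_1, of 0]
  by (simp add: bellman_value_def le_fun_def)

lemma bellman_value_le_pval:
  assumes "min_strat G \<tau>"
  shows "bellman_value G \<sigma> \<le> pval G \<sigma> \<tau>"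
proof (rule bellman_value_le_postfixpoint)
  show "sink_payoff G \<le> pval G \<sigma> \<tau>"
    by (simp add: le_fun_def sink_payoff_le_pval)
  show "bellman G \<sigma> (pval G \<sigma> \<tau>) \<le> pval G \<sigma> \<tau>"
    using bellman_le_next_exp[OF assms] pval_fixpoint by (metis le_funI)
qed

lemma pval_greedy_le_bellman_value:
  "pval G \<sigma> (greedy G (bellman_value G \<sigma>)) \<le> bellman_value G \<sigma>"
  by (rule pval_le_postfixpoint)
    (simp_all add: sink_payoff_le_bellman_value bellman_eq_next_exp_greedy[symmetric]
      bellman_value_fixpoint)

text \<open>Against a fixed \<open>\<sigma>\<close>, MIN faces a one-player problem, solved greedily with respect to the
  least fixpoint of its Bellman operator.\<close>

lemma best_resp_greedy: "best_resp_min G \<sigma> (greedy G (bellman_value G \<sigma>))"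
  unfolding best_resp_min_def
proof (intro conjI allI impI ballI)
  fix \<tau> x
  assume "min_strat G \<tau>"
  show "pval G \<sigma> (greedy G (bellman_value G \<sigma>)) x \<le> pval G \<sigma> \<tau> x"
    using le_funD[OF pval_greedy_le_bellman_value] le_funD[OF bellman_value_le_pval[OF \<open>min_strat G \<tau>\<close>]]
    by (rule order_trans)
qed (rule min_strat_greedy)

lemma best_resp_br: "best_resp_min G \<sigma> (br G \<sigma>)"
  unfolding br_def by (rule someI[where P = "best_resp_min G \<sigma>", OF best_resp_greedy])

lemma min_strat_br: "min_strat G (br G \<sigma>)"
  using best_resp_br by (simp add: best_resp_min_def)

lemma vmax_outside_verts: "x \<notin> verts G \<Longrightarrow> vmax G \<sigma> x = 0"
  by (simp add: vmax_def pval_outside_verts)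

lemma vmax_eq_bellman_value: "vmax G \<sigma> = bellman_value G \<sigma>"
proof
  fix x
  show "vmax G \<sigma> x = bellman_value G \<sigma> x"
  proof (rule antisym)
    show "vmax G \<sigma> x \<le> bellman_value G \<sigma> x"
    proof (cases "x \<in> verts G")
      case True
      then have "vmax G \<sigma> x \<le> pval G \<sigma> (greedy G (bellman_value G \<sigma>)) x"
        using best_resp_br min_strat_greedy unfolding best_resp_min_def vmax_def by blast
      also have "\<dots> \<le> bellman_value G \<sigma> x"
        using pval_greedy_le_bellman_value by (rule le_funD)
      finally show ?thesis .
    next
      case False
      then show ?thesis
        using order_trans[OF sink_payoff_nonneg le_funD[OF sink_payoff_le_bellman_value]]
        by (simp add: vmax_outside_verts)
    qed
    show "bellman_value G \<sigma> x \<le> vmax G \<sigma> x"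
      unfolding vmax_def using bellman_value_le_pval[OF min_strat_br] by (rule le_funD)
  qed
qed

lemma vmax_fixpoint: "next_exp G \<sigma> (br G \<sigma>) (vmax G \<sigma>) = vmax G \<sigma>"
  unfolding vmax_def by (rule pval_fixpoint)

lemma vmax_Vmax: "x \<in> Vmax G \<Longrightarrow> vmax G \<sigma> x = vmax G \<sigma> (\<sigma> x)"
  by (metis vmax_fixpoint next_exp_Vmax)

lemma vmax_bellman_fixpoint: "bellman G \<sigma> (vmax G \<sigma>) = vmax G \<sigma>"
  by (simp add: vmax_eq_bellman_value bellman_value_fixpoint)

lemma vmax_le_pval: "min_strat G \<tau> \<Longrightarrow> vmax G \<sigma> x \<le> pval G \<sigma> \<tau> x"
  unfolding vmax_eq_bellman_value by (rule le_funD[OF bellman_value_le_pval])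

lemma vmax_le_next_exp: "min_strat G \<tau> \<Longrightarrow> vmax G \<sigma> x \<le> next_exp G \<sigma> \<tau> (vmax G \<sigma>) x"
  using bellman_le_next_exp[of \<tau> \<sigma> "vmax G \<sigma>" x] vmax_bellman_fixpoint by simp

lemma vmax_sink: "s \<in> Vsink G \<Longrightarrow> vmax G \<sigma> s = sval G s"
  by (simp add: vmax_def pval_sink)

lemma vmax_nonneg: "0 \<le> vmax G \<sigma> x"
  by (simp add: vmax_def pval_nonneg)

lemma vmax_le_1: "vmax G \<sigma> x \<le> 1"
  by (simp add: vmax_def pval_le_1)

lemma sink_payoff_le_vmax: "sink_payoff G x \<le> vmax G \<sigma> x"
  by (simp add: vmax_def sink_payoff_le_pval)

lemma vmax_trap:
  assumes "min_strat G \<tau>" "trap G \<sigma> \<tau> S" "S \<inter> Vsink G = {}" "x \<in> S"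
  shows "vmax G \<sigma> x = 0"
  using vmax_le_pval[OF assms(1), of \<sigma> x] pval_trap[OF assms(2-4)] vmax_nonneg[of \<sigma> x] by simp

lemma vmax_cong:
  assumes "\<And>x. x \<in> Vmax G \<Longrightarrow> \<sigma>1 x = \<sigma>2 x"
  shows "vmax G \<sigma>1 = vmax G \<sigma>2"
  by (simp add: vmax_eq_bellman_value bellman_value_def bellman_cong[OF assms])

section \<open>Maximum principle and strategy improvement\<close>

lemma trap_level_set:
  assumes le: "\<And>x. x \<in> S \<Longrightarrow> f x \<le> m"
    and closed: "\<And>x. x \<in> S \<Longrightarrow> f x = m \<Longrightarrow> succs G \<sigma> \<tau> x \<subseteq> S"
    and mean: "\<And>x. x \<in> S \<Longrightarrow> f x = m \<Longrightarrow> m \<le> next_exp G \<sigma> \<tau> f x"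
  shows "trap G \<sigma> \<tau> {x \<in> S. f x = m}"
  unfolding trap_def
proof (intro ballI subsetI CollectI conjI)
  fix x y
  assume x: "x \<in> {x \<in> S. f x = m}" and y: "y \<in> succs G \<sigma> \<tau> x"
  then have succs_S: "succs G \<sigma> \<tau> x \<subseteq> S"
    using closed by blast
  then show "y \<in> S"
    using y by blast
  show "f y = m"
    using le succs_S mean x y by (intro next_exp_ge_bound_imp_eq[of \<sigma> \<tau> x f m y]) auto
qed

text \<open>The excess \<open>g - pval\<close> is subharmonic, so the set where it attains its maximum is a trap;
  \<open>pval\<close> vanishes on sink-free traps, so \<open>g\<close> is constant there.\<close>

lemma max_principle:
  assumes \<sigma>: "max_strat G \<sigma>" and \<tau>: "min_strat G \<tau>"
    and sub: "\<And>x. x \<in> verts G \<Longrightarrow> g x \<le> next_exp G \<sigma> \<tau> g x"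
    and sinks: "\<And>s. s \<in> Vsink G \<Longrightarrow> g s \<le> sval G s"
    and traps: "\<And>S m. S \<subseteq> verts G - Vsink G \<Longrightarrow> S \<noteq> {} \<Longrightarrow> trap G \<sigma> \<tau> S \<Longrightarrow>
                  (\<And>x. x \<in> S \<Longrightarrow> g x = m) \<Longrightarrow> m \<le> 0"
    and x: "x \<in> verts G"
  shows "g x \<le> pval G \<sigma> \<tau> x"
proof (rule ccontr)
  assume gt: "\<not> g x \<le> pval G \<sigma> \<tau> x"
  define d where "d = (\<lambda>y. g y - pval G \<sigma> \<tau> y)"
  define M where "M = Max (d ` verts G)"
  define S where "S = {y \<in> verts G. d y = M}"
  have le_M: "d y \<le> M" if "y \<in> verts G" for y
    using finite_verts that by (simp add: M_def)
  have M_pos: "0 < M"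
    using le_M[OF x] gt by (simp add: d_def)
  have "M \<in> d ` verts G"
    using finite_verts x unfolding M_def by (intro Max_in) auto
  then have "S \<noteq> {}"
    by (auto simp: S_def)
  have "d s \<le> 0" if "s \<in> Vsink G" for s
    using sinks[OF that] by (simp add: d_def pval_sink[OF that])
  then have S_sinks: "S \<inter> Vsink G = {}"
    using M_pos by (force simp: S_def)
  have "trap G \<sigma> \<tau> S"
    unfolding S_def
  proof (rule trap_level_set)
    fix y
    assume y: "y \<in> verts G" "d y = M"
    show "succs G \<sigma> \<tau> y \<subseteq> verts G"
      using succs_subset_verts[OF \<sigma> \<tau> y(1)] .
    have "d y \<le> next_exp G \<sigma> \<tau> d y"
      using sub[OF y(1)] fun_cong[OF pval_fixpoint[of \<sigma> \<tau>], of y] by (simp add: d_def next_exp_diff)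
    then show "M \<le> next_exp G \<sigma> \<tau> d y"
      using y(2) by simp
  qed (rule le_M)
  moreover have "g y = M" if "y \<in> S" for y
    using pval_trap[OF \<open>trap G \<sigma> \<tau> S\<close> S_sinks that] that by (simp add: S_def d_def)
  ultimately have "M \<le> 0"
    using traps[of S M] \<open>S \<noteq> {}\<close> S_sinks by (auto simp: S_def)
  with M_pos show False
    by simp
qed

lemma trap_unswitch:
  assumes switch: "\<And>x. x \<in> Vmax G \<Longrightarrow> \<sigma>' x = \<sigma> x \<or> vmax G \<sigma> x < vmax G \<sigma> (\<sigma>' x)"
    and S: "trap G \<sigma>' \<tau> S" and const: "\<And>x. x \<in> S \<Longrightarrow> vmax G \<sigma> x = m"
  shows "trap G \<sigma> \<tau> S"
proof -
  have "\<sigma>' x = \<sigma> x" if "x \<in> S" "x \<in> Vmax G" for x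
  proof -
    have "\<sigma>' x \<in> S"
      using S that by (auto simp: trap_def succs_def)
    then show ?thesis
      using switch[OF that(2)] const that(1) by fastforce
  qed
  then show ?thesis
    using S succs_cong_max[of _ G \<sigma> \<sigma>'] by (simp add: trap_def)
qed

lemma vmax_le_switch:
  assumes \<sigma>': "max_strat G \<sigma>'"
    and switch: "\<And>x. x \<in> Vmax G \<Longrightarrow> \<sigma>' x = \<sigma> x \<or> vmax G \<sigma> x < vmax G \<sigma> (\<sigma>' x)"
  shows "vmax G \<sigma> \<le> vmax G \<sigma>'"
proof (rule le_funI)
  fix x0
  let ?v = "vmax G \<sigma>" and ?\<tau> = "br G \<sigma>'"
  show "?v x0 \<le> vmax G \<sigma>' x0"
  proof (cases "x0 \<in> verts G")
    case True
    have "?v x0 \<le> pval G \<sigma>' ?\<tau> x0"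
    proof (rule max_principle[OF \<sigma>' min_strat_br _ _ _ True])
      fix x
      show "?v x \<le> next_exp G \<sigma>' ?\<tau> ?v x"
      proof (cases "x \<in> Vmax G")
        case True
        then show ?thesis
          using switch[OF True] vmax_Vmax[OF True, of \<sigma>] by (auto simp: next_exp_Vmax)
      next
        case False
        then show ?thesis
          using vmax_le_next_exp[OF min_strat_br, of \<sigma> x] next_exp_cong_max[of x G \<sigma>' \<sigma>] by simp
      qed
    next
      fix s
      assume "s \<in> Vsink G"
      then show "?v s \<le> sval G s"
        by (simp add: vmax_sink)
    next
      fix S m
      assume S: "S \<subseteq> verts G - Vsink G" "S \<noteq> {}" "trap G \<sigma>' ?\<tau> S"
        and const: "\<And>x. x \<in> S \<Longrightarrow> ?v x = m"
      obtain x where "x \<in> S"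
        using S(2) by blast
      moreover have "trap G \<sigma> ?\<tau> S"
        using switch S(3) const by (rule trap_unswitch)
      ultimately have "?v x = 0"
        by (intro vmax_trap[OF min_strat_br]) (use S(1) in auto)
      then show "m \<le> 0"
        using const[OF \<open>x \<in> S\<close>] by simp
    qed
    then show ?thesis
      by (simp add: vmax_def)
  qed (simp add: vmax_outside_verts)
qed

lemma vmax_less_switch:
  assumes "x \<in> Vmax G" "vmax G \<sigma> x < vmax G \<sigma> (\<sigma>' x)" "vmax G \<sigma> \<le> vmax G \<sigma>'"
  shows "vmax G \<sigma> x < vmax G \<sigma>' x"
  using assms(2) vmax_Vmax[OF assms(1), of \<sigma>'] le_funD[OF assms(3), of "\<sigma>' x"] by simp

lemma optimal_pair_if_no_improving_switch:
  assumes \<sigma>: "max_strat G \<sigma>"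
    and no_switch: "\<And>x y. x \<in> Vmax G \<Longrightarrow> y \<in> outn G x \<Longrightarrow> vmax G \<sigma> y \<le> vmax G \<sigma> x"
  shows "optimal_pair G \<sigma> (br G \<sigma>)"
proof -
  let ?\<tau> = "br G \<sigma>" and ?v = "vmax G \<sigma>"
  have upper: "pval G \<sigma>' ?\<tau> \<le> ?v" if "max_strat G \<sigma>'" for \<sigma>'
  proof (rule pval_le_postfixpoint)
    show "sink_payoff G \<le> ?v"
      by (simp add: le_fun_def vmax_def sink_payoff_le_pval)
    show "next_exp G \<sigma>' ?\<tau> ?v \<le> ?v"
    proof (rule le_funI)
      fix y
      show "next_exp G \<sigma>' ?\<tau> ?v y \<le> ?v y"
      proof (cases "y \<in> Vmax G")
        case True
        then have "\<sigma>' y \<in> outn G y"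
          using that by (simp add: max_strat_def outn_def)
        then show ?thesis
          using no_switch[OF True] True by (simp add: next_exp_Vmax)
      next
        case False
        then show ?thesis
          using vmax_fixpoint[of \<sigma>] next_exp_cong_max[of y G \<sigma>' \<sigma>] by (metis order_refl)
      qed
    qed
  qed
  have best_max: "best_resp_max G ?\<tau> \<sigma>"
    using \<sigma> upper by (simp add: best_resp_max_def vmax_def le_fun_def)
  define \<sigma>\<^sub>0 where "\<sigma>\<^sub>0 = (SOME \<sigma>. best_resp_max G ?\<tau> \<sigma>)"
  have "best_resp_max G ?\<tau> \<sigma>\<^sub>0"
    unfolding \<sigma>\<^sub>0_def by (rule someI[where P = "best_resp_max G ?\<tau>", OF best_max])
  then have "vmin G ?\<tau> x = ?v x" if "x \<in> verts G" for x
    using upper[of \<sigma>\<^sub>0] \<sigma> that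
    unfolding vmin_def \<sigma>\<^sub>0_def[symmetric] best_resp_max_def vmax_def le_fun_def
    by (blast intro: antisym)
  then show ?thesis
    using \<sigma> min_strat_br by (simp add: optimal_pair_def vmax_def)
qed

end

section \<open>The transformed game\<close>

definition arc_target :: "('v, 'a) ssg_scheme \<Rightarrow> ('v \<times> 'v) set \<Rightarrow> 'v \<Rightarrow> 'v \<Rightarrow> 'v + 'v \<times> 'v" where
  "arc_target G A x y = (if (x, y) \<in> repl G A then Inr (x, y) else Inl y)"

lemma inj_arc_target: "inj_on (arc_target G A x) S"
  by (auto intro!: inj_onI simp: arc_target_def split: if_splits)

lemma repl_subset_arcs: "repl G A \<subseteq> arcs G"
  by (auto simp: repl_def)

lemma transf_simps:
  "Vmax (transf G A \<sigma>) = Inl ` Vmax G"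
  "Vmin (transf G A \<sigma>) = Inl ` Vmin G"
  "Vrand (transf G A \<sigma>) = Inl ` Vrand G"
  "Vsink (transf G A \<sigma>) = Inl ` Vsink G \<union> Inr ` repl G A"
  "sval (transf G A \<sigma>) (Inl x) = sval G x"
  "sval (transf G A \<sigma>) (Inr (x, y)) = vmax G \<sigma> y"
  "prob (transf G A \<sigma>) (Inl x) (arc_target G A x y) = prob G x y"
  by (simp_all add: transf_def arc_target_def)

lemma transf_mem [simp]:
  "Inl x \<in> Vmax (transf G A \<sigma>) \<longleftrightarrow> x \<in> Vmax G"
  "Inl x \<in> Vmin (transf G A \<sigma>) \<longleftrightarrow> x \<in> Vmin G"
  "Inl x \<in> Vrand (transf G A \<sigma>) \<longleftrightarrow> x \<in> Vrand G"
  "Inl x \<in> Vsink (transf G A \<sigma>) \<longleftrightarrow> x \<in> Vsink G"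
  "Inr e \<notin> Vmax (transf G A \<sigma>)"
  "Inr e \<notin> Vmin (transf G A \<sigma>)"
  "Inr e \<notin> Vrand (transf G A \<sigma>)"
  "Inr e \<in> Vsink (transf G A \<sigma>) \<longleftrightarrow> e \<in> repl G A"
  by (auto simp: transf_simps)

lemma verts_transf: "verts (transf G A \<sigma>) = Inl ` verts G \<union> Inr ` repl G A"
  by (auto simp: verts_def transf_simps)

lemma arcs_transf_Inl:
  "(Inl x, b) \<in> arcs (transf G A \<sigma>) \<longleftrightarrow> (\<exists>y. (x, y) \<in> arcs G \<and> b = arc_target G A x y)"
proof (cases b)
  case (Inr e)
  then show ?thesis
    using repl_subset_arcs by (cases e) (auto simp: transf_def arc_target_def repl_def)
qed (auto simp: transf_def arc_target_def)

lemma outn_transf_Inl: "outn (transf G A \<sigma>) (Inl x) = arc_target G A x ` outn G x"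
  unfolding outn_def arcs_transf_Inl by auto

lemma arc_target_in_arcs_transf:
  "(Inl x, arc_target G A x y) \<in> arcs (transf G A \<sigma>) \<longleftrightarrow> (x, y) \<in> arcs G"
  using inj_onD[OF inj_arc_target[of G A x UNIV]] by (auto simp: arcs_transf_Inl)

lemma lift_strat_Inl: "lift_strat G A \<sigma>' (Inl x) = arc_target G A x (\<sigma>' x)"
  by (simp add: lift_strat_def arc_target_def)

lemma sink_payoff_transf_Inl: "sink_payoff (transf G A \<sigma>) (Inl x) = sink_payoff G x"
  by (simp add: sink_payoff_def transf_simps(5))

lemma next_exp_transf_Inr: "next_exp (transf G A \<sigma>) \<sigma>1 \<tau>1 f (Inr e) = f (Inr e)"
  by (simp add: next_exp_def)

context wf_ssg
begin

lemma arc_target_self: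
  assumes "x \<notin> Vmax G" "x \<notin> Vmin G" "x \<notin> Vrand G"
  shows "arc_target G A x x = Inl x"
proof -
  have "(x, x) \<notin> repl G A"
  proof
    assume repl: "(x, x) \<in> repl G A"
    then have "x \<in> verts G"
      using repl_subset_arcs arcs_verts by blast
    then show False
      using repl assms by (auto simp: verts_def repl_def)
  qed
  then show ?thesis
    by (simp add: arc_target_def)
qed

lemma sum_outn_transf_Inl:
  "(\<Sum>b \<in> outn (transf G A \<sigma>) (Inl x). prob (transf G A \<sigma>) (Inl x) b * f b)
     = (\<Sum>y \<in> outn G x. prob G x y * f (arc_target G A x y))"
  by (simp add: outn_transf_Inl sum.reindex[OF inj_arc_target] transf_simps)

lemma next_exp_transf_Inl:
  "next_exp (transf G A \<sigma>) (lift_strat G A \<sigma>1) (lift_strat G A \<tau>1) f (Inl x)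
     = next_exp G \<sigma>1 \<tau>1 (\<lambda>y. f (arc_target G A x y)) x"
  using arc_target_self[of x A]
  by (simp add: next_exp_def lift_strat_Inl sum_outn_transf_Inl)

lemma bellman_transf_Inl:
  "bellman (transf G A \<sigma>) (lift_strat G A \<sigma>1) f (Inl x)
     = bellman G \<sigma>1 (\<lambda>y. f (arc_target G A x y)) x"
  using arc_target_self[of x A]
  by (simp add: bellman_def lift_strat_Inl sum_outn_transf_Inl) (simp add: outn_transf_Inl image_image)

lemma succs_transf_Inl:
  "succs (transf G A \<sigma>) (lift_strat G A \<sigma>1) (lift_strat G A \<tau>1) (Inl x)
     = arc_target G A x ` succs G \<sigma>1 \<tau>1 x"
  using arc_target_self[of x A] by (simp add: succs_def lift_strat_Inl outn_transf_Inl)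

lemma wf_ssg_transf: "wf_ssg (transf G A \<sigma>)"
proof
  let ?H = "transf G A \<sigma>"
  have repl_verts: "repl G A \<subseteq> verts G \<times> verts G"
    using repl_subset_arcs arcs_verts by blast
  then have "finite (repl G A)"
    using finite_verts by (meson finite_SigmaI finite_subset)
  then show "finite (verts ?H)"
    using finite_verts by (simp add: verts_transf)
  show "Vmax ?H \<inter> Vmin ?H = {}"
    using max_min_disjoint by (auto simp: transf_simps)
  show "Vsink ?H \<inter> (Vmax ?H \<union> Vmin ?H \<union> Vrand ?H) = {}"
    using sink_disjoint by (auto simp: transf_simps)
  show "arcs ?H \<subseteq> verts ?H \<times> verts ?H"
  proof
    fix e
    assume "e \<in> arcs ?H"
    then consider x y where "e = (Inl x, Inl y)" "(x, y) \<in> arcs G"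
      | x y where "e = (Inl x, Inr (x, y))" "(x, y) \<in> repl G A"
      | d where "e = (Inr d, Inr d)" "d \<in> repl G A"
      by (auto simp: transf_def)
    then show "e \<in> verts ?H \<times> verts ?H"
      by cases (use arcs_verts repl_verts in \<open>auto simp: verts_transf\<close>)
  qed
  show "outn ?H b \<noteq> {}" if "b \<in> Vmin ?H" for b
    using that outn_min_nonempty by (auto simp: transf_simps outn_transf_Inl)
  show "0 < prob ?H b c" if "b \<in> Vrand ?H" "c \<in> outn ?H b" for b c
    using that prob_pos by (auto simp: transf_simps outn_transf_Inl)
  show "(\<Sum>c \<in> outn ?H b. prob ?H b c) = 1" if "b \<in> Vrand ?H" for b
    using that prob_sum sum_outn_transf_Inl[of A \<sigma> _ "\<lambda>_. 1"] by (auto simp: transf_simps)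
  show "0 \<le> sval ?H s" "sval ?H s \<le> 1" if "s \<in> Vsink ?H" for s
    using that sval_nonneg sval_le_1 vmax_nonneg vmax_le_1 by (auto simp: transf_simps)
qed

lemma max_strat_lift: "max_strat G \<sigma>' \<Longrightarrow> max_strat (transf G A \<sigma>) (lift_strat G A \<sigma>')"
  by (auto simp: max_strat_def transf_simps lift_strat_Inl arc_target_in_arcs_transf)

lemma min_strat_lift: "min_strat G \<tau> \<Longrightarrow> min_strat (transf G A \<sigma>) (lift_strat G A \<tau>)"
  by (auto simp: min_strat_def transf_simps lift_strat_Inl arc_target_in_arcs_transf)

lemma vmax_transf_Inr:
  assumes "e \<in> repl G A"
  shows "vmax (transf G A \<sigma>) \<rho> (Inr e) = vmax G \<sigma> (snd e)"
proof -
  interpret H: wf_ssg "transf G A \<sigma>"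
    by (rule wf_ssg_transf)
  show ?thesis
    using assms H.vmax_sink[of "Inr e" \<rho>] by (cases e) (simp add: transf_simps)
qed

lemma vmax_transf_Inl_le: "vmax (transf G A \<sigma>) (lift_strat G A \<sigma>) (Inl x) \<le> vmax G \<sigma> x"
proof -
  let ?H = "transf G A \<sigma>" and ?\<tau> = "br G \<sigma>"
  interpret H: wf_ssg ?H
    by (rule wf_ssg_transf)
  define u :: "'v + 'v \<times> 'v \<Rightarrow> real"
    where "u b = (case b of Inl y \<Rightarrow> vmax G \<sigma> y | Inr e \<Rightarrow> vmax G \<sigma> (snd e))" for b
  have u_target: "u (arc_target G A y z) = vmax G \<sigma> z" for y z
    by (simp add: u_def arc_target_def)
  have "pval ?H (lift_strat G A \<sigma>) (lift_strat G A ?\<tau>) \<le> u"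
  proof (rule H.pval_le_postfixpoint; rule le_funI)
    fix b
    show "sink_payoff ?H b \<le> u b"
    proof (cases b)
      case (Inl y)
      then show ?thesis
        by (simp add: u_def sink_payoff_transf_Inl sink_payoff_le_vmax)
    next
      case (Inr e)
      then show ?thesis
        using vmax_nonneg by (cases e) (simp add: u_def sink_payoff_def transf_simps)
    qed
    show "next_exp ?H (lift_strat G A \<sigma>) (lift_strat G A ?\<tau>) u b \<le> u b"
    proof (cases b)
      case (Inl y)
      then show ?thesis
        using vmax_fixpoint[of \<sigma>] by (simp add: next_exp_transf_Inl u_target) (simp add: u_def)
    qed (simp add: next_exp_transf_Inr)
  qed
  then have "pval ?H (lift_strat G A \<sigma>) (lift_strat G A ?\<tau>) (Inl x) \<le> u (Inl x)"
    by (rule le_funD)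
  moreover have "vmax ?H (lift_strat G A \<sigma>) (Inl x) \<le> pval ?H (lift_strat G A \<sigma>) (lift_strat G A ?\<tau>) (Inl x)"
    by (rule H.vmax_le_pval[OF min_strat_lift[OF min_strat_br]])
  ultimately show ?thesis
    by (simp add: u_def)
qed

lemma vmax_transf_Inl: "vmax (transf G A \<sigma>) (lift_strat G A \<sigma>) (Inl x) = vmax G \<sigma> x"
proof (rule antisym[OF vmax_transf_Inl_le])
  let ?H = "transf G A \<sigma>"
  let ?W = "vmax ?H (lift_strat G A \<sigma>)"
  interpret H: wf_ssg ?H
    by (rule wf_ssg_transf)
  have target: "?W (Inl z) \<le> ?W (arc_target G A y z)" for y z
    using vmax_transf_Inl_le[of A \<sigma> z] vmax_transf_Inr[of "(y, z)" A \<sigma>]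
    by (simp add: arc_target_def)
  have "vmax G \<sigma> \<le> (\<lambda>z. ?W (Inl z))"
    unfolding vmax_eq_bellman_value
  proof (rule bellman_value_le_postfixpoint; rule le_funI)
    fix y
    show "sink_payoff G y \<le> ?W (Inl y)"
      using H.sink_payoff_le_vmax[of "Inl y"] by (simp add: sink_payoff_transf_Inl)
    have "bellman G \<sigma> (\<lambda>z. ?W (Inl z)) y \<le> bellman G \<sigma> (\<lambda>z. ?W (arc_target G A y z)) y"
      using target by (intro le_funD[OF monoD[OF mono_bellman]] le_funI)
    also have "\<dots> = ?W (Inl y)"
      using fun_cong[OF H.vmax_bellman_fixpoint, of "lift_strat G A \<sigma>" "Inl y"]
      by (simp add: bellman_transf_Inl)
    finally show "bellman G \<sigma> (\<lambda>z. ?W (Inl z)) y \<le> ?W (Inl y)" .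
  qed
  then show "vmax G \<sigma> x \<le> ?W (Inl x)"
    by (rule le_funD)
qed

lemma vmax_transf_arc_target:
  "vmax (transf G A \<sigma>) (lift_strat G A \<sigma>) (arc_target G A x y) = vmax G \<sigma> y"
  by (simp add: arc_target_def vmax_transf_Inl vmax_transf_Inr)

lemma improves_switch:
  assumes \<sigma>: "max_strat G \<sigma>" and x: "x \<in> Vmax G" and y: "y \<in> outn G x"
    and less: "vmax G \<sigma> x < vmax G \<sigma> y"
  shows "max_strat G (\<sigma>(x := y))" and "improves G A \<sigma> (\<sigma>(x := y))"
proof -
  let ?\<sigma>' = "\<sigma>(x := y)" and ?H = "transf G A \<sigma>"
  let ?W = "vmax ?H (lift_strat G A \<sigma>)" and ?W' = "vmax ?H (lift_strat G A ?\<sigma>')"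
  interpret H: wf_ssg ?H
    by (rule wf_ssg_transf)
  show \<sigma>': "max_strat G ?\<sigma>'"
    using \<sigma> y by (simp add: max_strat_def outn_def)
  have switch_x: "?W (Inl x) < ?W (lift_strat G A ?\<sigma>' (Inl x))"
    using less by (simp add: lift_strat_Inl vmax_transf_Inl vmax_transf_arc_target)
  have "lift_strat G A ?\<sigma>' b = lift_strat G A \<sigma> b \<or> ?W b < ?W (lift_strat G A ?\<sigma>' b)"
    if "b \<in> Vmax ?H" for b
    using that switch_x by (auto simp: transf_simps lift_strat_Inl)
  then have le: "?W \<le> ?W'"
    using H.vmax_le_switch[OF max_strat_lift[OF \<sigma>']] by blast
  have strict: "?W (Inl x) < ?W' (Inl x)"
    using H.vmax_less_switch[OF _ switch_x le] x by simp
  show "improves G A \<sigma> ?\<sigma>'"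
    unfolding improves_def Let_def
  proof (intro conjI ballI impI)
    show "?W (Inl z) \<le> ?W' (Inl z)" for z
      using le by (rule le_funD)
    show "\<exists>z \<in> verts G. ?W (Inl z) \<noteq> ?W' (Inl z)"
      using x strict by (intro bexI[of _ x]) (auto simp: verts_def)
    show "?\<sigma>' z = \<sigma> z" if "?W' (Inl z) = ?W (Inl z)" for z
      using that strict by (cases "z = x") auto
  qed
qed

lemma vmax_transf_le_next_exp:
  assumes "min_strat G \<tau>"
  shows "vmax (transf G A \<sigma>) (lift_strat G A \<sigma>') (Inl x)
           \<le> next_exp G \<sigma>' \<tau> (\<lambda>y. vmax (transf G A \<sigma>) (lift_strat G A \<sigma>') (arc_target G A x y)) x"
proof -
  interpret H: wf_ssg "transf G A \<sigma>"
    by (rule wf_ssg_transf)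
  show ?thesis
    using H.vmax_le_next_exp[OF min_strat_lift[OF assms], of "lift_strat G A \<sigma>'" "Inl x"]
    by (simp add: next_exp_transf_Inl)
qed

context
  fixes A \<sigma> \<sigma>' \<tau>
  assumes \<sigma>': "max_strat G \<sigma>'" and \<tau>: "min_strat G \<tau>"
    and below: "\<And>x. x \<in> verts G \<Longrightarrow> vmax G \<sigma> x \<le> vmax (transf G A \<sigma>) (lift_strat G A \<sigma>') (Inl x)"
    and keep: "\<And>x. x \<in> Vmax G \<Longrightarrow> vmax (transf G A \<sigma>) (lift_strat G A \<sigma>') (Inl x) = vmax G \<sigma> x \<Longrightarrow>
                 \<sigma>' x = \<sigma> x"
begin

interpretation H: wf_ssg "transf G A \<sigma>"
  by (rule wf_ssg_transf)

lemma vmax_transf_arc_target_le: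
  "vmax (transf G A \<sigma>) (lift_strat G A \<sigma>') (arc_target G A x y)
     \<le> vmax (transf G A \<sigma>) (lift_strat G A \<sigma>') (Inl y)"
proof (cases "(x, y) \<in> repl G A")
  case True
  then have "y \<in> verts G"
    using repl_subset_arcs arcs_verts by blast
  then show ?thesis
    using True below vmax_transf_Inr by (simp add: arc_target_def)
qed (simp add: arc_target_def)

lemma vmax_transf_subharmonic:
  "vmax (transf G A \<sigma>) (lift_strat G A \<sigma>') (Inl x)
     \<le> next_exp G \<sigma>' \<tau> (\<lambda>y. vmax (transf G A \<sigma>) (lift_strat G A \<sigma>') (Inl y)) x"
  using vmax_transf_le_next_exp[OF \<tau>, of A \<sigma> \<sigma>' x]
    le_funD[OF monoD[OF mono_next_exp le_funI[OF vmax_transf_arc_target_le]]]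
  by (rule order_trans)

lemma trap_transf_Inl:
  assumes S: "trap G \<sigma>' \<tau> S"
    and const: "\<And>x. x \<in> S \<Longrightarrow> vmax (transf G A \<sigma>) (lift_strat G A \<sigma>') (Inl x) = m"
    and not_attained: "\<And>x. x \<in> S \<Longrightarrow> vmax G \<sigma> x \<noteq> m"
  shows "trap (transf G A \<sigma>) (lift_strat G A \<sigma>') (lift_strat G A \<tau>) (Inl ` S)"
  unfolding trap_def
proof (intro ballI subsetI)
  let ?W' = "vmax (transf G A \<sigma>) (lift_strat G A \<sigma>')"
  fix b c
  assume "b \<in> Inl ` S" and "c \<in> succs (transf G A \<sigma>) (lift_strat G A \<sigma>') (lift_strat G A \<tau>) b"
  then obtain x y where x: "x \<in> S" and y: "y \<in> succs G \<sigma>' \<tau> x" and c: "c = arc_target G A x y"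
    by (auto simp: succs_transf_Inl)
  have succs_S: "succs G \<sigma>' \<tau> x \<subseteq> S"
    using S x by (simp add: trap_def)
  have "?W' (arc_target G A x y) = m"
  proof (rule next_exp_ge_bound_imp_eq[OF _ _ y])
    show "?W' (arc_target G A x z) \<le> m" if "z \<in> succs G \<sigma>' \<tau> x" for z
      using vmax_transf_arc_target_le[of x z] const succs_S that by auto
    show "m \<le> next_exp G \<sigma>' \<tau> (\<lambda>y. ?W' (arc_target G A x y)) x"
      using vmax_transf_le_next_exp[OF \<tau>, of A \<sigma> \<sigma>' x] const[OF x] by simp
  qed
  moreover have "y \<in> S"
    using succs_S y by blast
  ultimately have "(x, y) \<notin> repl G A"
    using vmax_transf_Inr[of "(x, y)" A \<sigma>] not_attained[of y] by (auto simp: arc_target_def)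
  then show "c \<in> Inl ` S"
    using \<open>y \<in> S\<close> by (simp add: c arc_target_def)
qed

lemma trap_vmax_level_set:
  assumes S: "S \<subseteq> verts G" "trap G \<sigma>' \<tau> S"
    and const: "\<And>x. x \<in> S \<Longrightarrow> vmax (transf G A \<sigma>) (lift_strat G A \<sigma>') (Inl x) = m"
  shows "trap G \<sigma> \<tau> {x \<in> S. vmax G \<sigma> x = m}"
proof (rule trap_level_set)
  fix x
  assume x: "x \<in> S"
  then show "vmax G \<sigma> x \<le> m"
    using below[of x] const[OF x] S(1) by auto
  assume vx: "vmax G \<sigma> x = m"
  have "succs G \<sigma> \<tau> x = succs G \<sigma>' \<tau> x"
    using keep const[OF x] vx by (intro succs_cong_max) simp
  then show "succs G \<sigma> \<tau> x \<subseteq> S"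
    using S(2) x by (simp add: trap_def)
  show "m \<le> next_exp G \<sigma> \<tau> (vmax G \<sigma>) x"
    using vmax_le_next_exp[OF \<tau>, of \<sigma> x] vx by simp
qed

text \<open>Either \<open>vmax G \<sigma>\<close> attains the level \<open>m\<close> in \<open>S\<close>, and its level set is a sink-free trap of
  \<open>G\<close>, or it does not, and no arc inside \<open>S\<close> is replaced.\<close>

lemma vmax_transf_trap_nonpos:
  assumes S: "S \<subseteq> verts G - Vsink G" "S \<noteq> {}" "trap G \<sigma>' \<tau> S"
    and const: "\<And>x. x \<in> S \<Longrightarrow> vmax (transf G A \<sigma>) (lift_strat G A \<sigma>') (Inl x) = m"
  shows "m \<le> 0"
proof (cases "\<exists>x \<in> S. vmax G \<sigma> x = m")
  case True
  then obtain x where x: "x \<in> S" "vmax G \<sigma> x = m"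
    by blast
  have "trap G \<sigma> \<tau> {x \<in> S. vmax G \<sigma> x = m}"
    using S(1,3) const by (intro trap_vmax_level_set) auto
  then have "vmax G \<sigma> x = 0"
    by (rule vmax_trap[OF \<tau>]) (use S(1) x in auto)
  then show ?thesis
    using x(2) by simp
next
  case False
  obtain x where x: "x \<in> S"
    using S(2) by blast
  have "trap (transf G A \<sigma>) (lift_strat G A \<sigma>') (lift_strat G A \<tau>) (Inl ` S)"
    using S(3) const False by (intro trap_transf_Inl) auto
  then have "vmax (transf G A \<sigma>) (lift_strat G A \<sigma>') (Inl x) = 0"
    by (rule H.vmax_trap[OF min_strat_lift[OF \<tau>]]) (use S(1) x in \<open>auto simp: transf_simps\<close>)
  then show ?thesis
    using const[OF x] by simp
qed

lemma vmax_transf_le_pval: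
  assumes "x \<in> verts G"
  shows "vmax (transf G A \<sigma>) (lift_strat G A \<sigma>') (Inl x) \<le> pval G \<sigma>' \<tau> x"
proof (rule max_principle[OF \<sigma>' \<tau> _ _ _ assms])
  show "vmax (transf G A \<sigma>) (lift_strat G A \<sigma>') (Inl y)
          \<le> next_exp G \<sigma>' \<tau> (\<lambda>y. vmax (transf G A \<sigma>) (lift_strat G A \<sigma>') (Inl y)) y" for y
    by (rule vmax_transf_subharmonic)
  show "vmax (transf G A \<sigma>) (lift_strat G A \<sigma>') (Inl s) \<le> sval G s" if "s \<in> Vsink G" for s
    using that H.vmax_sink[of "Inl s"] by (simp add: transf_simps)
qed (rule vmax_transf_trap_nonpos)

end

lemma improves_imp_vmax_less:
  assumes \<sigma>': "max_strat G \<sigma>'" and improves: "improves G A \<sigma> \<sigma>'"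
  shows "vmax G \<sigma> < vmax G \<sigma>'"
proof -
  let ?W = "vmax (transf G A \<sigma>) (lift_strat G A \<sigma>)"
  let ?W' = "vmax (transf G A \<sigma>) (lift_strat G A \<sigma>')"
  have le: "\<And>x. x \<in> verts G \<Longrightarrow> ?W (Inl x) \<le> ?W' (Inl x)"
    and ne: "\<exists>x \<in> verts G. ?W (Inl x) \<noteq> ?W' (Inl x)"
    and keep: "\<And>x. x \<in> Vmax G \<Longrightarrow> ?W' (Inl x) = ?W (Inl x) \<Longrightarrow> \<sigma>' x = \<sigma> x"
    using improves unfolding improves_def Let_def by blast+
  have below: "vmax G \<sigma> x \<le> ?W' (Inl x)" if "x \<in> verts G" for x
    using le[OF that] by (simp add: vmax_transf_Inl)
  have keep': "\<sigma>' x = \<sigma> x" if "x \<in> Vmax G" "?W' (Inl x) = vmax G \<sigma> x" for x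
    using keep that by (simp add: vmax_transf_Inl)
  have above: "?W' (Inl x) \<le> vmax G \<sigma>' x" if "x \<in> verts G" for x
    using vmax_transf_le_pval[OF \<sigma>' min_strat_br below keep' that] by (simp only: vmax_def[of G \<sigma>'])
  have "vmax G \<sigma> \<le> vmax G \<sigma>'"
  proof (rule le_funI)
    fix x
    show "vmax G \<sigma> x \<le> vmax G \<sigma>' x"
    proof (cases "x \<in> verts G")
      case True
      then show ?thesis
        using order_trans[OF below above] by blast
    qed (simp add: vmax_outside_verts)
  qed
  moreover obtain x where "x \<in> verts G" "vmax G \<sigma> x \<noteq> ?W' (Inl x)"
    using ne by (auto simp: vmax_transf_Inl)
  then have "vmax G \<sigma> x < vmax G \<sigma>' x"
    using below above by fastforce
  ultimately show ?thesis
    by (auto simp: less_le_not_le le_fun_def)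
qed

lemma improvement_exists:
  assumes \<sigma>: "max_strat G \<sigma>" and "\<not> optimal_pair G \<sigma> (br G \<sigma>)"
  shows "\<exists>\<sigma>'. max_strat G \<sigma>' \<and> improves G A \<sigma> \<sigma>'"
proof -
  obtain x y where "x \<in> Vmax G" "y \<in> outn G x" "vmax G \<sigma> x < vmax G \<sigma> y"
    using optimal_pair_if_no_improving_switch[OF \<sigma>] assms(2) by force
  then show ?thesis
    using improves_switch[OF \<sigma>] by blast
qed

lemma optimal_if_no_gsia_step:
  assumes "max_strat G \<sigma>" "\<not> (\<exists>\<sigma>'. gsia_step G \<sigma> \<sigma>')"
  shows "optimal_pair G \<sigma> (br G \<sigma>)"
  using improvement_exists[of \<sigma> "{}"] assms by (auto simp: gsia_step_def)

end

section \<open>Termination\<close>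

lemma infinite_range_strict_chain:
  fixes f :: "nat \<Rightarrow> 'a::order"
  assumes "\<And>n. f n < f (Suc n)"
  shows "infinite (range f)"
proof
  assume "finite (range f)"
  moreover have "inj f"
    using assms by (intro strict_mono_imp_inj_on) (simp add: strict_mono_Suc_iff)
  ultimately show False
    using finite_imageD infinite_UNIV_nat by blast
qed

context wf_ssg
begin

lemma finite_vmax_image: "finite (vmax G ` {\<sigma>. max_strat G \<sigma>})"
proof (rule finite_subset)
  show "vmax G ` {\<sigma>. max_strat G \<sigma>} \<subseteq> vmax G ` (\<Pi>\<^sub>E x \<in> Vmax G. verts G)"
  proof (rule image_subsetI)
    fix \<sigma>
    assume "\<sigma> \<in> {\<sigma>. max_strat G \<sigma>}"
    then have "restrict \<sigma> (Vmax G) \<in> (\<Pi>\<^sub>E x \<in> Vmax G. verts G)"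
      using arcs_verts by (auto simp: max_strat_def)
    moreover have "vmax G \<sigma> = vmax G (restrict \<sigma> (Vmax G))"
      by (rule vmax_cong) simp
    ultimately show "vmax G \<sigma> \<in> vmax G ` (\<Pi>\<^sub>E x \<in> Vmax G. verts G)"
      by blast
  qed
  show "finite (vmax G ` (\<Pi>\<^sub>E x \<in> Vmax G. verts G))"
    using finite_verts by (intro finite_imageI finite_PiE) (auto simp: verts_def)
qed

lemma no_infinite_gsia_run: "\<not> (\<exists>s. \<forall>i. gsia_step G (s i) (s (Suc i)))"
proof
  assume "\<exists>s. \<forall>i. gsia_step G (s i) (s (Suc i))"
  then obtain s where step: "\<And>i. gsia_step G (s i) (s (Suc i))"
    by blast
  have "vmax G (s i) < vmax G (s (Suc i))" for i
    using step[of i] improves_imp_vmax_less by (auto simp: gsia_step_def)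
  then have "infinite (range (\<lambda>i. vmax G (s i)))"
    by (rule infinite_range_strict_chain)
  moreover have "range (\<lambda>i. vmax G (s i)) \<subseteq> vmax G ` {\<sigma>. max_strat G \<sigma>}"
    using step by (auto simp: gsia_step_def)
  ultimately show False
    using finite_vmax_image finite_subset by blast
qed

end

theorem theorem22:
  fixes G :: "'v ssg"
  assumes "valid_ssg G"
  shows "(\<forall>\<sigma>. max_strat G \<sigma> \<longrightarrow> \<not> optimal_pair G \<sigma> (br G \<sigma>) \<longrightarrow>
            (\<forall>A \<subseteq> arcs G. \<exists>\<sigma>'. max_strat G \<sigma>' \<and> improves G A \<sigma> \<sigma>'))
       \<and> \<not> (\<exists>s :: nat \<Rightarrow> ('v \<Rightarrow> 'v). \<forall>i. gsia_step G (s i) (s (Suc i)))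
       \<and> (\<forall>\<sigma>. max_strat G \<sigma> \<longrightarrow> \<not> (\<exists>\<sigma>'. gsia_step G \<sigma> \<sigma>') \<longrightarrow> optimal_pair G \<sigma> (br G \<sigma>))"
proof -
  interpret wf_ssg G
    using assms by (rule valid_ssg_imp_wf_ssg)
  show ?thesis
    using improvement_exists no_infinite_gsia_run optimal_if_no_gsia_step by blast
qed

end
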